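(* Let $d \geq 2$ and $n \geq d$ be integers. Then for every real $Z \geq 2$, \[ \sum_{\substack{\mathbf{z} \in \mathbb{Z}^{n+1} \setminus \{\mathbf{0}\} \\ \|\mathbf{z}\| \leq Z}} \frac{1}{\|\nu_{d,n}(\mathbf{z})\|} = \left( \int_{\mathcal{B}_{n+1}(1)} \frac{\mathrm{d}\mathbf{t}}{\|\nu_{d,n}(\mathbf{t})\|} \right) Z^{n+1-d}\left(1 + O\left(\frac{\log Z}{Z}\right)\right), \] where the implied constant depends only on $d$ and $n$; moreover, if $n > d$ the error term can be taken to be $O(1/Z)$ instead of $O(\log Z/Z)$.
   Context: $\|\cdot\|$ is the Euclidean norm and $\mathcal{B}_{n+1}(1)$ is the closed unit ball in $\mathbb{R}^{n+1}$. $N_{d,n} = \binom{n+d}{d}$ and $\nu_{d,n} : \mathbb{R}^{n+1} \to \mathbb{R}^{N_{d,n}}$ is the Veronese map listing all monomials of degree $d$ in the $n+1$ coordinates in lexicographic order. *)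

theory Defs
  imports "HOL-Analysis.Analysis"
begin

text \<open>Exponent vectors of degree d in the coordinates indexed by 'n
  (the index set of the Veronese map nu_{d,n}; there are binom(n+d,d) of them).\<close>
definition veronese_exps :: "nat \<Rightarrow> ('n::finite \<Rightarrow> nat) set" where
  "veronese_exps d = {\<alpha>. (\<Sum>i\<in>UNIV. \<alpha> i) = d}"

text \<open>The Veronese map: the coordinate indexed by alpha is the monomial t^alpha.
  (The lexicographic listing order of the coordinates does not affect the norm.)\<close>
definition veronese :: "nat \<Rightarrow> real ^ 'n::finite \<Rightarrow> ('n \<Rightarrow> nat) \<Rightarrow> real" where
  "veronese d t = (\<lambda>\<alpha>. \<Prod>i\<in>UNIV. (t $ i) ^ (\<alpha> i))"

definition veronese_norm :: "nat \<Rightarrow> real ^ 'n::finite \<Rightarrow> real" where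
  "veronese_norm d t = L2_set (veronese d t) (veronese_exps d)"

definition int_points :: "real \<Rightarrow> (real ^ 'n::finite) set" where
  "int_points Z = {z. (\<forall>i. z $ i \<in> \<int>) \<and> z \<noteq> 0 \<and> norm z \<le> Z}"

end

theory Submission
  imports Defs
begin

text \<open>
  Write f(t) = 1 / |nu(t)|. It is continuous away from the origin, homogeneous of degree -d
  and comparable to |t|^(-d); hence it is integrable near the origin because d < n + 1, and
  its integral over the ball of radius Z is Z^(n+1-d) I by scaling. The lattice sum is the
  integral of t \<mapsto> f(round t) over the unit cubes centred at the nonzero lattice points of
  norm at most Z. The two integrands differ by O(|t|^(-d-1)) in the bulk (the gradient of f),
  by O(Z^(-d)) on a shell of bounded width around the sphere of radius Z, where their supports
  differ, and by at most f itself on a fixed ball around the origin. Integrating these bounds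
  gives an absolute error O(Z^(n-d)), resp. O(log Z) when n = d, i.e. a relative error O(1/Z),
  resp. O(log Z / Z). Radial integrals are estimated with dyadic step functions in place of
  polar coordinates.
\<close>

section \<open>Bounds for the Veronese norm\<close>

lemma finite_veronese_exps: "finite (veronese_exps d :: ('n::finite \<Rightarrow> nat) set)"
proof (rule finite_subset)
  show "veronese_exps d \<subseteq> PiE (UNIV::'n set) (\<lambda>_. {..d})"
    by (auto simp: veronese_exps_def PiE_UNIV_domain intro: member_le_sum[of _ UNIV, simplified])
qed (intro finite_PiE, auto)

lemma veronese_exps_power: "(\<lambda>j. if j = i then d else 0) \<in> veronese_exps d"
  by (simp add: veronese_exps_def)

lemma veronese_power: "veronese d t (\<lambda>j. if j = i then d else 0) = (t $ i) ^ d"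
  unfolding veronese_def by (simp add: if_distrib[of "\<lambda>e. (t$_)^e"] cong: if_cong)

lemma abs_veronese_le_norm_power:
  fixes t :: "real^'n::finite"
  assumes "\<alpha> \<in> veronese_exps d"
  shows "\<bar>veronese d t \<alpha>\<bar> \<le> norm t ^ d"
proof -
  have "\<bar>veronese d t \<alpha>\<bar> = (\<Prod>i\<in>UNIV. \<bar>t$i\<bar> ^ \<alpha> i)"
    by (simp add: veronese_def abs_prod power_abs)
  also have "\<dots> \<le> (\<Prod>i\<in>UNIV. norm t ^ \<alpha> i)"
    by (intro prod_mono conjI power_mono component_le_norm_cart) auto
  also have "\<dots> = norm t ^ d"
    using assms by (simp add: power_sum[symmetric] veronese_exps_def)
  finally show ?thesis .
qed

lemma norm_power_le_veronese_norm:
  fixes t :: "real^'n::finite"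
  shows "norm t ^ d \<le> sqrt CARD('n) ^ d * veronese_norm d t"
proof -
  have "Max (range (\<lambda>j. \<bar>t$j\<bar>)) \<in> range (\<lambda>j. \<bar>t$j\<bar>)" by (rule Max_in) auto
  then obtain i where "\<bar>t$i\<bar> = Max (range (\<lambda>j. \<bar>t$j\<bar>))" by (metis rangeE)
  then have i: "\<And>j. \<bar>t$j\<bar> \<le> \<bar>t$i\<bar>" by simp
  have "norm t = L2_set (\<lambda>j. \<bar>t$j\<bar>) UNIV" by (simp add: norm_vec_def)
  also have "\<dots> \<le> L2_set (\<lambda>j. \<bar>t$i\<bar>) (UNIV::'n set)" by (intro L2_set_mono i) auto
  also have "\<dots> = sqrt CARD('n) * \<bar>t$i\<bar>" by (simp add: L2_set_constant)
  finally have "norm t ^ d \<le> sqrt CARD('n) ^ d * \<bar>t$i\<bar> ^ d"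
    by (metis norm_ge_zero power_mono power_mult_distrib)
  also have "\<bar>t$i\<bar> ^ d \<le> veronese_norm d t"
  proof -
    have "\<bar>veronese d t (\<lambda>j. if j = i then d else 0)\<bar>
        \<le> L2_set (\<lambda>\<alpha>. \<bar>veronese d t \<alpha>\<bar>) (veronese_exps d)"
      by (rule member_le_L2_set[OF finite_veronese_exps veronese_exps_power])
    then show ?thesis by (simp add: veronese_norm_def veronese_power power_abs L2_set_def)
  qed
  finally show ?thesis by simp
qed

lemma veronese_norm_le_norm_power:
  fixes t :: "real^'n::finite"
  shows "veronese_norm d t \<le> sqrt (card (veronese_exps d :: ('n \<Rightarrow> nat) set)) * norm t ^ d"
proof -
  have "veronese_norm d t = L2_set (\<lambda>\<alpha>. \<bar>veronese d t \<alpha>\<bar>) (veronese_exps d)"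
    by (simp add: veronese_norm_def L2_set_def)
  also have "\<dots> \<le> L2_set (\<lambda>\<alpha>. norm t ^ d) (veronese_exps d :: ('n \<Rightarrow> nat) set)"
    by (intro L2_set_mono abs_veronese_le_norm_power) auto
  finally show ?thesis by (simp add: L2_set_constant)
qed

lemma veronese_norm_scaleR:
  fixes t :: "real^'n::finite"
  shows "veronese_norm d (c *\<^sub>R t) = \<bar>c\<bar> ^ d * veronese_norm d t"
proof -
  have "veronese d (c *\<^sub>R t) \<alpha> = c ^ d * veronese d t \<alpha>" if "\<alpha> \<in> veronese_exps d" for \<alpha>
    using that by (simp add: veronese_def veronese_exps_def power_mult_distrib prod.distrib
                             power_sum[symmetric])
  then have "veronese_norm d (c *\<^sub>R t) = L2_set (\<lambda>\<alpha>. \<bar>c\<bar> ^ d * veronese d t \<alpha>) (veronese_exps d)"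
    unfolding veronese_norm_def L2_set_def
    by (intro arg_cong[where f=sqrt] sum.cong) (auto simp: power_mult_distrib power_abs[symmetric])
  then show ?thesis
    by (simp add: veronese_norm_def L2_set_right_distrib)
qed

lemma veronese_norm_nonneg: "0 \<le> veronese_norm d t"
  by (simp add: veronese_norm_def)

lemma inverse_veronese_norm_nonneg: "0 \<le> 1 / veronese_norm d t"
  by (simp add: veronese_norm_nonneg)

lemma veronese_norm_pos:
  fixes t :: "real^'n::finite"
  assumes "t \<noteq> 0"
  shows "0 < veronese_norm d t"
proof -
  have "0 < norm t ^ d" using assms by simp
  also have "\<dots> \<le> sqrt CARD('n) ^ d * veronese_norm d t" by (rule norm_power_le_veronese_norm)
  finally show ?thesis by (simp add: zero_less_mult_iff)
qed

lemma continuous_on_veronese_norm: "continuous_on S (veronese_norm d :: real^'n::finite \<Rightarrow> real)"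
  unfolding veronese_norm_def L2_set_def veronese_def by (intro continuous_intros)

lemma inverse_veronese_norm_le:
  fixes t :: "real^'n::finite"
  assumes "t \<noteq> 0"
  shows "1 / veronese_norm d t \<le> sqrt CARD('n) ^ d / norm t ^ d"
  using norm_power_le_veronese_norm[of t d] veronese_norm_pos[OF assms, of d] assms
  by (simp add: field_simps)

lemma inverse_veronese_norm_le_shell:
  fixes x :: "real^'n::finite"
  assumes "0 < Z" "1 \<le> a" "Z / a \<le> norm x"
  shows "1 / veronese_norm d x \<le> sqrt (real CARD('n)) ^ d * a ^ d / Z ^ d"
proof -
  have Za: "0 < Z / a" using assms by simp
  then have x: "0 < norm x" using assms(3) by linarith
  then have "1 / veronese_norm d x \<le> sqrt (real CARD('n)) ^ d / norm x ^ d"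
    by (intro inverse_veronese_norm_le) auto
  also have "\<dots> \<le> sqrt (real CARD('n)) ^ d / (Z / a) ^ d"
    using assms(3) x Za by (intro divide_left_mono power_mono) auto
  finally show ?thesis by (simp add: power_divide)
qed

section \<open>Lipschitz estimate for the inverse Veronese norm\<close>

text \<open>The mean-value bounds below are multiplied through by \<open>M\<close>, so that no exponent
  \<open>k - 1\<close> (truncated at 0) occurs.\<close>

lemma abs_power_diff_le:
  fixes x y M :: real
  assumes "\<bar>x\<bar> \<le> M" "\<bar>y\<bar> \<le> M"
  shows "\<bar>x ^ k - y ^ k\<bar> * M \<le> k * M ^ k * \<bar>x - y\<bar>"
proof (induction k)
  case (Suc k)
  have M: "0 \<le> M" using assms by linarith
  have "x ^ Suc k - y ^ Suc k = (x ^ k - y ^ k) * x + y ^ k * (x - y)"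
    by (simp add: algebra_simps)
  then have "\<bar>x ^ Suc k - y ^ Suc k\<bar> \<le> \<bar>x ^ k - y ^ k\<bar> * \<bar>x\<bar> + \<bar>y\<bar> ^ k * \<bar>x - y\<bar>"
    by (metis abs_mult abs_triangle_ineq power_abs)
  also have "\<dots> \<le> \<bar>x ^ k - y ^ k\<bar> * M + M ^ k * \<bar>x - y\<bar>"
    using assms by (intro add_mono mult_mono power_mono) auto
  finally have "\<bar>x ^ Suc k - y ^ Suc k\<bar> \<le> \<bar>x ^ k - y ^ k\<bar> * M + M ^ k * \<bar>x - y\<bar>" .
  from mult_right_mono[OF this M]
  have "\<bar>x ^ Suc k - y ^ Suc k\<bar> * M \<le> (\<bar>x ^ k - y ^ k\<bar> * M) * M + M ^ Suc k * \<bar>x - y\<bar>"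
    by (simp add: algebra_simps)
  also have "\<dots> \<le> (k * M ^ k * \<bar>x - y\<bar>) * M + M ^ Suc k * \<bar>x - y\<bar>"
    using Suc.IH M by (intro add_right_mono mult_right_mono)
  finally show ?case by (simp add: algebra_simps)
qed simp

lemma abs_prod_diff_le:
  fixes p q :: "'a \<Rightarrow> real"
  assumes "finite A" "0 \<le> M" "0 \<le> \<delta>"
    and "\<And>i. i \<in> A \<Longrightarrow> \<bar>p i\<bar> \<le> M ^ k i" "\<And>i. i \<in> A \<Longrightarrow> \<bar>q i\<bar> \<le> M ^ k i"
    and "\<And>i. i \<in> A \<Longrightarrow> \<bar>p i - q i\<bar> * M \<le> k i * M ^ k i * \<delta>"
  shows "\<bar>prod p A - prod q A\<bar> * M \<le> real (sum k A) * M ^ sum k A * \<delta>"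
  using assms(1,4-6)
proof (induction A rule: finite_induct)
  case (insert a F)
  let ?P = "prod p F" and ?Q = "prod q F" and ?K = "sum k F"
  have P: "\<bar>?P\<bar> \<le> M ^ ?K" and Q: "\<bar>q a\<bar> \<le> M ^ k a"
    using insert.prems by (auto simp: abs_prod power_sum intro!: prod_mono)
  have "\<bar>p a * ?P - q a * ?Q\<bar> * M \<le> (\<bar>p a - q a\<bar> * M) * \<bar>?P\<bar> + \<bar>q a\<bar> * (\<bar>?P - ?Q\<bar> * M)"
  proof -
    have "p a * ?P - q a * ?Q = (p a - q a) * ?P + q a * (?P - ?Q)" by (simp add: algebra_simps)
    then have "\<bar>p a * ?P - q a * ?Q\<bar> \<le> \<bar>p a - q a\<bar> * \<bar>?P\<bar> + \<bar>q a\<bar> * \<bar>?P - ?Q\<bar>"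
      by (metis abs_mult abs_triangle_ineq)
    from mult_right_mono[OF this assms(2)] show ?thesis by (simp add: algebra_simps)
  qed
  also have "\<dots> \<le> (k a * M ^ k a * \<delta>) * M ^ ?K + M ^ k a * (?K * M ^ ?K * \<delta>)"
  proof (rule add_mono)
    show "(\<bar>p a - q a\<bar> * M) * \<bar>?P\<bar> \<le> (k a * M ^ k a * \<delta>) * M ^ ?K"
      by (rule mult_mono[OF insert.prems(3) P]) (use assms(2,3) in auto)
    have IH: "\<bar>?P - ?Q\<bar> * M \<le> ?K * M ^ ?K * \<delta>" using insert by auto
    show "\<bar>q a\<bar> * (\<bar>?P - ?Q\<bar> * M) \<le> M ^ k a * (?K * M ^ ?K * \<delta>)"
      by (rule mult_mono[OF Q IH]) (use assms(2,3) in auto)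
  qed
  also have "\<dots> = (k a + ?K) * M ^ (k a + ?K) * \<delta>" by (simp add: algebra_simps power_add)
  finally show ?case using insert by simp
qed simp

lemma abs_veronese_diff_le:
  fixes x y :: "real^'n::finite"
  assumes "\<alpha> \<in> veronese_exps d" "norm x \<le> M" "norm y \<le> M"
  shows "\<bar>veronese d x \<alpha> - veronese d y \<alpha>\<bar> * M \<le> d * M ^ d * norm (x - y)"
proof -
  have M: "0 \<le> M" using assms(2) norm_ge_zero order_trans by blast
  have xy: "\<bar>x$i\<bar> \<le> M" "\<bar>y$i\<bar> \<le> M" for i
    using assms component_le_norm_cart order_trans by blast+
  have "\<bar>(x$i) ^ \<alpha> i - (y$i) ^ \<alpha> i\<bar> * M \<le> \<alpha> i * M ^ \<alpha> i * norm (x - y)" for i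
  proof -
    have "\<bar>(x$i) ^ \<alpha> i - (y$i) ^ \<alpha> i\<bar> * M \<le> \<alpha> i * M ^ \<alpha> i * \<bar>x$i - y$i\<bar>"
      by (rule abs_power_diff_le[OF xy])
    also have "\<dots> \<le> \<alpha> i * M ^ \<alpha> i * norm (x - y)"
      using component_le_norm_cart[of "x - y" i] M by (intro mult_left_mono) auto
    finally show ?thesis .
  qed
  then have "\<bar>veronese d x \<alpha> - veronese d y \<alpha>\<bar> * M \<le> sum \<alpha> UNIV * M ^ sum \<alpha> UNIV * norm (x - y)"
    unfolding veronese_def using xy M
    by (intro abs_prod_diff_le[where k=\<alpha>]) (auto simp: power_abs intro!: power_mono)
  then show ?thesis using assms(1) by (simp add: veronese_exps_def del: of_nat_sum)
qed

lemma abs_L2_set_diff_le: "\<bar>L2_set f A - L2_set g A\<bar> \<le> L2_set (\<lambda>x. f x - g x) A"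
proof -
  have "L2_set f A \<le> L2_set g A + L2_set (\<lambda>x. f x - g x) A"
    using L2_set_triangle_ineq[of g "\<lambda>x. f x - g x" A] by simp
  moreover have "L2_set g A \<le> L2_set f A + L2_set (\<lambda>x. f x - g x) A"
    using L2_set_triangle_ineq[of f "\<lambda>x. g x - f x" A]
    by (simp add: L2_set_def power2_commute)
  ultimately show ?thesis by linarith
qed

lemma veronese_norm_diff_le:
  fixes x y :: "real^'n::finite" and M :: real
  assumes "norm x \<le> M" "norm y \<le> M"
  shows "\<bar>veronese_norm d x - veronese_norm d y\<bar> * M
     \<le> real (card (veronese_exps d :: ('n \<Rightarrow> nat) set)) * real d * M ^ d * norm (x - y)"
proof -
  have M: "0 \<le> M" using assms norm_ge_zero order_trans by blast
  have "\<bar>veronese_norm d x - veronese_norm d y\<bar> * M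
      \<le> (\<Sum>\<alpha>\<in>veronese_exps d. \<bar>veronese d x \<alpha> - veronese d y \<alpha>\<bar> * M)"
    unfolding veronese_norm_def sum_distrib_right[symmetric]
    by (intro mult_right_mono M order_trans[OF abs_L2_set_diff_le L2_set_le_sum_abs])
  also have "\<dots> \<le> (\<Sum>\<alpha>\<in>(veronese_exps d :: ('n \<Rightarrow> nat) set). d * M ^ d * norm (x - y))"
    by (intro sum_mono abs_veronese_diff_le assms)
  finally show ?thesis by simp
qed

lemma norm_power_le_veronese_norm_mult:
  fixes x y :: "real^'n::finite" and a :: real
  assumes "1 \<le> a" "norm x \<le> a * norm y"
  shows "norm x ^ (2 * d) \<le> a ^ d * CARD('n) ^ d * (veronese_norm d x * veronese_norm d y)"
proof -
  let ?N = "real CARD('n)"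
  have "norm x ^ (2 * d) / a ^ d = norm x ^ d * (norm x / a) ^ d"
    by (simp add: power_divide mult_2 power_add)
  also have "\<dots> \<le> (sqrt ?N ^ d * veronese_norm d x) * (sqrt ?N ^ d * veronese_norm d y)"
  proof (rule mult_mono)
    have "(norm x / a) ^ d \<le> norm y ^ d"
      using assms by (intro power_mono) (auto simp: field_simps)
    also have "\<dots> \<le> sqrt ?N ^ d * veronese_norm d y" by (rule norm_power_le_veronese_norm)
    finally show "(norm x / a) ^ d \<le> sqrt ?N ^ d * veronese_norm d y" .
  qed (use assms in \<open>auto intro!: norm_power_le_veronese_norm mult_nonneg_nonneg veronese_norm_nonneg\<close>)
  also have "\<dots> = ?N ^ d * (veronese_norm d x * veronese_norm d y)"
    by (simp add: algebra_simps flip: power_mult_distrib)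
  finally show ?thesis
    using assms(1) by (simp add: pos_divide_le_eq ac_simps)
qed

lemma inverse_veronese_norm_diff_le:
  fixes x y :: "real^'n::finite" and a :: real
  assumes "x \<noteq> 0" "1 \<le> a" "norm y \<le> a * norm x" "norm x \<le> a * norm y"
  shows "\<bar>1 / veronese_norm d x - 1 / veronese_norm d y\<bar>
    \<le> real (card (veronese_exps d :: ('n \<Rightarrow> nat) set)) * real d * a ^ (2 * d)
        * real CARD('n) ^ d * norm (x - y) / norm x ^ (d + 1)"
proof -
  let ?E = "real (card (veronese_exps d :: ('n \<Rightarrow> nat) set))" and ?N = "real CARD('n)"
  let ?D = "\<bar>veronese_norm d x - veronese_norm d y\<bar>"
  let ?G = "veronese_norm d x * veronese_norm d y"
  define X where "X = norm x"
  define \<delta> where "\<delta> = norm (x - y)"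
  have X: "0 < X" using assms(1) by (simp add: X_def)
  have "y \<noteq> 0" using assms X_def X by auto
  then have Gx: "0 < veronese_norm d x" and Gy: "0 < veronese_norm d y"
    using assms(1) by (simp_all add: veronese_norm_pos)
  then have G: "0 < ?G" by simp
  have "?D * X * 1 \<le> ?D * X * a" using assms(2) X by (intro mult_left_mono) auto
  also have "\<dots> = ?D * (a * X)" by (simp add: ac_simps)
  also have "\<dots> \<le> ?E * d * (a * X) ^ d * \<delta>"
    unfolding \<delta>_def by (rule veronese_norm_diff_le) (use assms X in \<open>auto simp: X_def\<close>)
  finally have numerator: "?D * X \<le> ?E * d * a ^ d * X ^ d * \<delta>"
    by (simp add: power_mult_distrib mult.assoc)
  have "\<bar>1 / veronese_norm d x - 1 / veronese_norm d y\<bar> = ?D / ?G"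
    using Gx Gy by (simp add: divide_simps abs_div abs_minus_commute)
  then have "\<bar>1 / veronese_norm d x - 1 / veronese_norm d y\<bar> * X ^ (d + 1) = (?D * X) * X ^ d / ?G"
    by (simp add: mult.assoc mult.commute)
  also have "\<dots> \<le> (?E * d * a ^ d * X ^ d * \<delta>) * X ^ d / ?G"
    using numerator G X by (intro divide_right_mono mult_right_mono) auto
  also have "\<dots> = ?E * d * a ^ d * \<delta> * (X ^ (2 * d) / ?G)"
    by (simp add: mult_2 power_add)
  also have "\<dots> \<le> ?E * d * a ^ d * \<delta> * (a ^ d * ?N ^ d)"
    using norm_power_le_veronese_norm_mult[OF assms(2,4), of d] G assms(2)
    by (intro mult_left_mono) (auto simp: divide_le_eq X_def \<delta>_def)
  also have "\<dots> = ?E * d * a ^ (2 * d) * ?N ^ d * \<delta>"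
    by (simp add: mult_2 power_add)
  finally show ?thesis
    using X unfolding X_def \<delta>_def by (simp add: pos_le_divide_eq)
qed

section \<open>Integrability near the origin\<close>

lemma integrable_on_compact_continuous:
  fixes f :: "real^'n::finite \<Rightarrow> real"
  assumes "compact K" "continuous_on K f"
  shows "f integrable_on K"
proof -
  have "(\<lambda>x. indicator K x *\<^sub>R f x) integrable_on UNIV"
    by (rule integrable_on_lborel[OF borel_integrable_compact[OF assms]])
  moreover have "(\<lambda>x. indicator K x *\<^sub>R f x) = (\<lambda>x. if x \<in> K then f x else 0)"
    by (auto simp: indicator_def)
  ultimately show ?thesis by (simp add: integrable_restrict_UNIV)
qed

lemma has_integral_const_cball:
  fixes c :: real
  assumes "0 \<le> r"
  shows "((\<lambda>t::real^'n::finite. if norm t \<le> r then c else 0)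
           has_integral c * unit_ball_vol CARD('n) * r ^ CARD('n)) UNIV"
proof -
  have "((\<lambda>x::real^'n. 1) has_integral measure lborel (cball (0::real^'n) r)) (cball 0 r)"
    by (rule has_integral_measure_lborel[OF borel_closed[OF closed_cball] emeasure_lborel_cball_finite])
  from has_integral_mult_right[OF this, of c] assms show ?thesis
    by (simp add: content_cball mult.assoc flip: has_integral_restrict_UNIV[of "cball 0 r"])
qed

text \<open>On the shell \<open>\<rho> / 2^(K+1) < |t| \<le> \<rho>\<close> this dominates \<open>|t|^-p\<close>, and its integral
  is a geometric sum.\<close>

definition dyadic_step :: "real \<Rightarrow> nat \<Rightarrow> nat \<Rightarrow> real^'n::finite \<Rightarrow> real" where
  "dyadic_step \<rho> K p t = (\<Sum>i\<le>K. if norm t \<le> \<rho> / 2 ^ i then (2 ^ Suc i / \<rho>) ^ p else 0)"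

lemma dyadic_step_nonneg: "0 < \<rho> \<Longrightarrow> 0 \<le> dyadic_step \<rho> K p t"
  unfolding dyadic_step_def by (intro sum_nonneg) auto

lemma inverse_power_le_dyadic_step:
  assumes "0 < \<rho>" "\<rho> / 2 ^ Suc K < norm t" "norm t \<le> \<rho>"
  shows "1 / norm t ^ p \<le> dyadic_step \<rho> K p t"
  using assms(2,3)
proof (induction K)
  case 0
  have "0 < \<rho> / 2 ^ Suc 0" using assms(1) by simp
  then have "0 < norm t" using 0 by linarith
  then have "1 / norm t < 2 / \<rho>"
    using 0 assms(1) by (simp add: field_simps)
  then have "(1 / norm t) ^ p \<le> (2 / \<rho>) ^ p" by (intro power_mono) auto
  then show ?case using 0 by (simp add: dyadic_step_def power_one_over)
next
  case (Suc K)
  let ?term = "\<lambda>i. if norm t \<le> \<rho> / 2 ^ i then (2 ^ Suc i / \<rho>) ^ p else 0"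
  show ?case
  proof (cases "\<rho> / 2 ^ Suc K < norm t")
    case True
    then have "1 / norm t ^ p \<le> dyadic_step \<rho> K p t" using Suc by auto
    also have "\<dots> \<le> dyadic_step \<rho> (Suc K) p t"
      unfolding dyadic_step_def using assms(1) by (simp add: add_increasing2)
    finally show ?thesis .
  next
    case False
    have "0 < \<rho> / 2 ^ Suc (Suc K)" using assms(1) by simp
    then have "0 < norm t" using Suc.prems(1) by linarith
    then have "1 / norm t < 2 ^ Suc (Suc K) / \<rho>"
      using Suc.prems(1) assms(1) by (simp add: field_simps)
    then have "(1 / norm t) ^ p \<le> (2 ^ Suc (Suc K) / \<rho>) ^ p" by (intro power_mono) auto
    also have "\<dots> = ?term (Suc K)" using False by simp
    also have "\<dots> \<le> dyadic_step \<rho> (Suc K) p t"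
      unfolding dyadic_step_def using assms(1) by (intro member_le_sum) auto
    finally show ?thesis by (simp add: power_one_over)
  qed
qed

lemma has_integral_dyadic_step:
  assumes "0 < \<rho>" "p \<le> CARD('n::finite)"
  shows "((dyadic_step \<rho> K p :: real^'n \<Rightarrow> real) has_integral
           unit_ball_vol CARD('n) * 2 ^ p * \<rho> ^ (CARD('n) - p) * (\<Sum>i\<le>K. ((1/2) ^ (CARD('n) - p)) ^ i)) UNIV"
proof -
  let ?N = "CARD('n)"
  have term_eq: "(2 ^ Suc i / \<rho>) ^ p * unit_ball_vol ?N * (\<rho> / 2 ^ i) ^ ?N
        = unit_ball_vol ?N * 2 ^ p * \<rho> ^ (?N - p) * ((1/2) ^ (?N - p)) ^ i" for i
  proof -
    have "(\<rho> / 2 ^ i) ^ ?N = (\<rho> / 2 ^ i) ^ p * (\<rho> / 2 ^ i) ^ (?N - p)"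
      using assms(2) by (simp flip: power_add)
    then show ?thesis
      using assms(1) by (simp add: field_simps flip: power_mult)
  qed
  have "((dyadic_step \<rho> K p :: real^'n \<Rightarrow> real) has_integral
      (\<Sum>i\<le>K. (2 ^ Suc i / \<rho>) ^ p * unit_ball_vol ?N * (\<rho> / 2 ^ i) ^ ?N)) UNIV"
    unfolding dyadic_step_def
  proof (rule has_integral_sum)
    fix i
    show "((\<lambda>t::real^'n. if norm t \<le> \<rho> / 2 ^ i then (2 ^ Suc i / \<rho>) ^ p else 0) has_integral
        (2 ^ Suc i / \<rho>) ^ p * unit_ball_vol ?N * (\<rho> / 2 ^ i) ^ ?N) UNIV"
      by (rule has_integral_const_cball) (use assms(1) in simp)
  qed simp
  then show ?thesis
    unfolding term_eq by (simp only: sum_distrib_left)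
qed

lemma sum_power_le_two:
  fixes q :: real
  assumes "0 \<le> q" "q \<le> 1/2"
  shows "(\<Sum>i\<le>K. q ^ i) \<le> 2"
proof (induction K)
  case (Suc K)
  have "(\<Sum>i\<le>Suc K. q ^ i) = 1 + q * (\<Sum>i\<le>K. q ^ i)"
    by (simp add: sum.atMost_Suc_shift sum_distrib_left del: sum.atMost_Suc)
  also have "\<dots> \<le> 1 + 1/2 * 2"
    using Suc assms by (intro add_left_mono mult_mono) (auto intro: sum_nonneg)
  finally show ?case by simp
qed simp

definition cut_off_origin :: "nat \<Rightarrow> ('a::real_normed_vector \<Rightarrow> real) \<Rightarrow> 'a \<Rightarrow> real" where
  "cut_off_origin k f t = (if (1/2) ^ k \<le> norm t then f t else 0)"

lemma cut_off_origin_nonzero: "(1/2) ^ k \<le> norm t \<Longrightarrow> t \<noteq> 0"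
  by (auto simp: power_le_zero_eq)

context
  fixes f :: "real^'n::finite \<Rightarrow> real" and c :: real and p :: nat
  assumes cont: "continuous_on (cball 0 1 - {0}) f"
    and bound: "\<And>t. t \<in> cball 0 1 \<Longrightarrow> t \<noteq> 0 \<Longrightarrow> 0 \<le> f t \<and> f t \<le> c / norm t ^ p"
    and p: "p < CARD('n)"
begin

lemma integrable_cut_off_origin: "cut_off_origin k f integrable_on cball 0 1"
proof -
  let ?K = "cball 0 1 \<inter> {t::real^'n. (1/2) ^ k \<le> norm t}"
  have "compact ?K" by (intro compact_Int_closed compact_cball closed_Collect_le continuous_intros)
  moreover have "?K \<subseteq> cball 0 1 - {0}" using cut_off_origin_nonzero by blast
  ultimately have "f integrable_on ?K"
    by (intro integrable_on_compact_continuous continuous_on_subset[OF cont])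
  then have "(\<lambda>t. if t \<in> ?K then f t else 0) integrable_on UNIV"
    by (rule iffD2[OF integrable_restrict_UNIV])
  moreover have "(\<lambda>t. if t \<in> ?K then f t else 0) = (\<lambda>t. if t \<in> cball 0 1 then cut_off_origin k f t else 0)"
    by (auto simp: cut_off_origin_def)
  ultimately show ?thesis by (metis (no_types) integrable_restrict_UNIV)
qed

lemma integral_cut_off_origin_le:
  "integral (cball 0 1) (cut_off_origin k f) \<le> c * (unit_ball_vol CARD('n) * 2 ^ p * 2)"
proof -
  have c: "0 \<le> c"
  proof -
    obtain t :: "real^'n" where t: "norm t = 1" using vector_choose_size[of 1] by auto
    then have "0 \<le> f t \<and> f t \<le> c / norm t ^ p" by (intro bound) auto
    then show ?thesis using t by simp
  qed
  have step: "((\<lambda>t::real^'n. c * dyadic_step 1 k p t) has_integral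
      c * (unit_ball_vol CARD('n) * 2 ^ p * (\<Sum>i\<le>k. ((1/2) ^ (CARD('n) - p)) ^ i))) UNIV"
    using p by (intro has_integral_mult_right has_integral_dyadic_step[where \<rho>=1, simplified]) auto
  have "integral (cball 0 1) (cut_off_origin k f)
      = integral UNIV (\<lambda>t. if t \<in> cball 0 1 then cut_off_origin k f t else 0)"
    by (rule integral_restrict_UNIV[symmetric])
  also have "\<dots> \<le> c * (unit_ball_vol CARD('n) * 2 ^ p * (\<Sum>i\<le>k. ((1/2) ^ (CARD('n) - p)) ^ i))"
  proof (rule has_integral_le[OF integrable_integral step])
    show "(\<lambda>t. if t \<in> cball 0 1 then cut_off_origin k f t else 0) integrable_on UNIV"
      by (rule iffD2[OF integrable_restrict_UNIV integrable_cut_off_origin])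
    show "(if t \<in> cball 0 1 then cut_off_origin k f t else 0) \<le> c * dyadic_step 1 k p t" for t
    proof (cases "t \<in> cball 0 1 \<and> (1/2) ^ k \<le> norm t")
      case True
      have "1 / 2 ^ Suc k < (1/2::real) ^ k" by (simp add: field_simps)
      then have "1 / norm t ^ p \<le> dyadic_step 1 k p t"
        using True by (intro inverse_power_le_dyadic_step) (auto simp: power_one_over)
      then have "c / norm t ^ p \<le> c * dyadic_step 1 k p t"
        using c mult_left_mono by fastforce
      moreover have "f t \<le> c / norm t ^ p"
        using True bound[OF _ cut_off_origin_nonzero] by blast
      ultimately show ?thesis using True by (simp add: cut_off_origin_def)
    qed (use c dyadic_step_nonneg[of 1 k p t] in \<open>auto simp: cut_off_origin_def\<close>)
  qed
  also have "\<dots> \<le> c * (unit_ball_vol CARD('n) * 2 ^ p * 2)"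
    using c power_decreasing[of 1 "CARD('n) - p" "1/2::real"] p
    by (intro mult_left_mono sum_power_le_two) auto
  finally show ?thesis .
qed

lemma integrable_on_unit_cball_singular: "f integrable_on cball 0 1"
proof -
  have "(\<lambda>t. if t = 0 then 0 else f t) integrable_on cball 0 1"
  proof (rule monotone_convergence_increasing[THEN conjunct1])
    show "cut_off_origin k f integrable_on cball 0 1" for k by (rule integrable_cut_off_origin)
    show "cut_off_origin k f t \<le> cut_off_origin (Suc k) f t" if t: "t \<in> cball 0 1" for k t
    proof (cases "(1/2) ^ k \<le> norm t")
      case True
      moreover have "(1/2::real) ^ Suc k \<le> (1/2) ^ k" by (rule power_decreasing) auto
      ultimately have "(1/2) ^ Suc k \<le> norm t" by linarith
      then show ?thesis using True by (simp add: cut_off_origin_def)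
    next
      case False
      have "t \<noteq> 0" if "(1/2) ^ Suc k \<le> norm t" using that by (rule cut_off_origin_nonzero)
      then show ?thesis using False bound[OF t] by (auto simp: cut_off_origin_def)
    qed
    show "(\<lambda>k. cut_off_origin k f t) \<longlonglongrightarrow> (if t = 0 then 0 else f t)" for t
    proof (cases "t = 0")
      case False
      then obtain k0 where k0: "(1/2::real) ^ k0 < norm t"
        using real_arch_pow_inv[of "norm t" "1/2"] by auto
      have "cut_off_origin k f t = f t" if "k0 \<le> k" for k
      proof -
        have "(1/2::real) ^ k \<le> (1/2) ^ k0" using that by (intro power_decreasing) auto
        then have "(1/2) ^ k \<le> norm t" using k0 by linarith
        then show ?thesis by (simp add: cut_off_origin_def)
      qed
      then have "\<forall>\<^sub>F k in sequentially. cut_off_origin k f t = f t"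
        by (rule eventually_sequentiallyI)
      then show ?thesis using False by (simp add: tendsto_eventually)
    qed (simp add: cut_off_origin_def power_le_zero_eq)
    have "0 \<le> integral (cball 0 1) (cut_off_origin k f)" for k
      using bound cut_off_origin_nonzero
      by (intro integral_nonneg integrable_cut_off_origin) (auto simp: cut_off_origin_def)
    then show "bounded (range (\<lambda>k. integral (cball 0 1) (cut_off_origin k f)))"
      using integral_cut_off_origin_le
      by (intro boundedI[where B="c * (unit_ball_vol CARD('n) * 2 ^ p * 2)"]) force
  qed
  then show ?thesis
    by (rule integrable_spike[OF _ negligible_sing[of 0]]) auto
qed

end

section \<open>Scaling\<close>

lemma cball_subset_cbox_cart: "cball (0::real^'n::finite) r \<subseteq> cbox (\<chi> i. - r) (\<chi> i. r)"
proof
  fix x :: "real^'n" assume "x \<in> cball 0 r"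
  then have "- r \<le> x$i \<and> x$i \<le> r" for i using component_le_norm_cart[of x i] by auto
  then show "x \<in> cbox (\<chi> i. - r) (\<chi> i. r)" by (simp add: mem_box_cart)
qed

lemma has_integral_cball_homogeneous:
  fixes f :: "real^'n::finite \<Rightarrow> real"
  assumes "(f has_integral I) (cball 0 1)" "0 < Z" "d \<le> CARD('n)"
    and homogeneous: "\<And>t. f ((1 / Z) *\<^sub>R t) = Z ^ d * f t"
  shows "(f has_integral Z ^ (CARD('n) - d) * I) (cball 0 Z)"
proof -
  let ?g = "\<lambda>t. if t \<in> cball 0 1 then f t else 0"
  have "(?g has_integral I) (cbox (\<chi> i. - 1) (\<chi> i. 1))"
    using assms(1) cball_subset_cbox_cart[of 1] by (subst has_integral_restrict) auto
  from has_integral_affinity'[OF this, of "1 / Z" 0] assms(2)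
  have "((\<lambda>t. ?g ((1 / Z) *\<^sub>R t)) has_integral Z ^ CARD('n) * I) (cbox (\<chi> i. - Z) (\<chi> i. Z))"
    unfolding add_0_right by (simp add: scaleR_vec_def field_simps)
  moreover have "?g ((1 / Z) *\<^sub>R t) = (if t \<in> cball 0 Z then Z ^ d * f t else 0)" for t
    using assms(2) by (simp add: homogeneous field_simps)
  ultimately have "((\<lambda>t. if t \<in> cball 0 Z then Z ^ d * f t else 0) has_integral Z ^ CARD('n) * I)
      (cbox (\<chi> i. - Z) (\<chi> i. Z))"
    by simp
  then have "((\<lambda>t. Z ^ d * f t) has_integral Z ^ CARD('n) * I) (cball 0 Z)"
    by (rule has_integral_restrict[OF cball_subset_cbox_cart, THEN iffD1])
  from has_integral_mult_right[OF this, of "1 / Z ^ d"] assms(2,3) show ?thesis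
    by (simp add: power_diff)
qed

lemma integrable_inverse_veronese_norm:
  assumes "d < CARD('n::finite)"
  shows "(\<lambda>t. 1 / veronese_norm d t) integrable_on cball (0::real^'n) 1"
proof (rule integrable_on_unit_cball_singular)
  show "continuous_on (cball 0 1 - {0}) (\<lambda>t::real^'n. 1 / veronese_norm d t)"
    by (intro continuous_intros continuous_on_veronese_norm) (force dest: veronese_norm_pos[of _ d])
  show "0 \<le> 1 / veronese_norm d t \<and> 1 / veronese_norm d t \<le> sqrt CARD('n) ^ d / norm t ^ d"
    if "t \<noteq> 0" for t :: "real^'n"
    using inverse_veronese_norm_le[OF that] by (simp add: veronese_norm_nonneg)
qed (rule assms)

lemma has_integral_inverse_veronese_norm_cball:
  assumes "d < CARD('n::finite)" "0 < Z"
  shows "((\<lambda>t::real^'n. 1 / veronese_norm d t) has_integral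
          Z ^ (CARD('n) - d) * integral (cball 0 1) (\<lambda>t::real^'n. 1 / veronese_norm d t))
        (cball 0 Z)"
proof (rule has_integral_cball_homogeneous)
  show "((\<lambda>t::real^'n. 1 / veronese_norm d t) has_integral integral (cball 0 1) (\<lambda>t::real^'n. 1 / veronese_norm d t))
      (cball (0::real^'n) 1)"
    using integrable_inverse_veronese_norm[OF assms(1)] by (rule integrable_integral)
  show "1 / veronese_norm d ((1 / Z) *\<^sub>R t) = Z ^ d * (1 / veronese_norm d t)" for t :: "real^'n"
    using assms(2) by (simp add: veronese_norm_scaleR power_one_over)
qed (use assms in auto)

lemma integral_inverse_veronese_norm_pos:
  assumes "d < CARD('n::finite)"
  shows "0 < integral (cball (0::real^'n) 1) (\<lambda>t::real^'n. 1 / veronese_norm d t)"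
proof -
  let ?E = "sqrt (card (veronese_exps d :: ('n \<Rightarrow> nat) set))"
  have E: "0 < ?E"
    using finite_veronese_exps[of d] veronese_exps_power[of _ d] card_gt_0_iff by fastforce
  let ?h = "\<lambda>t::real^'n. if t = 0 then 0 else 1 / ?E"
  have "((\<lambda>t::real^'n. if norm t \<le> 1 then 1 / ?E else 0)
      has_integral 1 / ?E * unit_ball_vol CARD('n) * 1 ^ CARD('n)) UNIV"
    by (rule has_integral_const_cball) simp
  then have "((\<lambda>t::real^'n. 1 / ?E) has_integral 1 / ?E * unit_ball_vol CARD('n)) (cball 0 1)"
    by (simp flip: has_integral_restrict_UNIV[of "cball 0 1"])
  from has_integral_spike[OF negligible_sing[of 0] _ this]
  have "(?h has_integral 1 / ?E * unit_ball_vol CARD('n)) (cball 0 1)" by auto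
  moreover have "?h t \<le> 1 / veronese_norm d t" if "t \<in> cball 0 1" for t :: "real^'n"
  proof (cases "t = 0")
    case False
    have "veronese_norm d t \<le> ?E * norm t ^ d" by (rule veronese_norm_le_norm_power)
    also have "\<dots> \<le> ?E" using that E by (simp add: mult_left_le power_le_one)
    finally show ?thesis using veronese_norm_pos[OF False] False by (simp add: frac_le)
  qed (simp add: veronese_norm_nonneg)
  ultimately have "1 / ?E * unit_ball_vol CARD('n) \<le> integral (cball 0 1) (\<lambda>t::real^'n. 1 / veronese_norm d t)"
    by (rule has_integral_le[OF _ integrable_integral[OF integrable_inverse_veronese_norm[OF assms]]])
  moreover have "0 < 1 / ?E * unit_ball_vol CARD('n)"
    using E by simp
  ultimately show ?thesis by linarith
qed

section \<open>Lattice sums as integrals\<close>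

lemma finite_int_points: "finite (int_points Z :: (real^'n::finite) set)"
proof (rule finite_imageD)
  let ?M = "\<lceil>Z\<rceil>"
  have "(\<lambda>z i. \<lfloor>z $ i\<rfloor>) ` (int_points Z :: (real^'n) set) \<subseteq> PiE (UNIV::'n set) (\<lambda>_. {-?M..?M})"
  proof clarify
    fix z :: "real^'n" assume "z \<in> int_points Z"
    then have "\<bar>z $ i\<bar> \<le> Z" for i
      using component_le_norm_cart[of z i] by (auto simp: int_points_def)
    then have "-?M \<le> \<lfloor>z $ i\<rfloor> \<and> \<lfloor>z $ i\<rfloor> \<le> ?M" for i
      by (smt (verit) ceiling_correct floor_le_ceiling floor_mono le_floor_iff of_int_minus)
    then show "(\<lambda>i. \<lfloor>z $ i\<rfloor>) \<in> PiE UNIV (\<lambda>_. {-?M..?M})" by (simp add: PiE_UNIV_domain)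
  qed
  then show "finite ((\<lambda>z i. \<lfloor>z $ i\<rfloor>) ` (int_points Z :: (real^'n) set))"
    by (rule finite_subset) (intro finite_PiE, auto)
  have "z $ i = of_int \<lfloor>z $ i\<rfloor>" if "z \<in> int_points Z" for z :: "real^'n" and i
    using that by (auto simp: int_points_def elim: Ints_cases)
  then show "inj_on (\<lambda>z i. \<lfloor>z $ i\<rfloor>) (int_points Z :: (real^'n) set)"
    by (intro inj_onI) (metis vec_eq_iff)
qed

definition round_vec :: "real^'n::finite \<Rightarrow> real^'n" where
  "round_vec t = (\<chi> i. of_int (round (t $ i)))"

lemma round_vec_integer: "round_vec t $ i \<in> \<int>"
  by (simp add: round_vec_def)

lemma norm_diff_round_vec_le: "norm (t - round_vec t) \<le> CARD('n) / 2" for t :: "real^'n::finite"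
proof -
  have "norm (t - round_vec t) \<le> (\<Sum>i\<in>UNIV. \<bar>(t - round_vec t) $ i\<bar>)" by (rule norm_le_l1_cart)
  also have "\<dots> \<le> (\<Sum>i\<in>(UNIV::'n set). 1/2)"
    by (intro sum_mono) (metis of_int_round_abs_le abs_minus_commute round_vec_def
        vec_lambda_beta vector_minus_component)
  finally show ?thesis by simp
qed

lemma norm_round_vec_le: "norm (round_vec t) \<le> 2 * norm t"
proof -
  have "\<bar>of_int (round (t $ i))\<bar> \<le> \<bar>2 * t $ i\<bar>" for i
    using round_diff_minimal[of "t $ i" 0] by linarith
  then have "norm (round_vec t) \<le> norm (2 *\<^sub>R t)"
    by (intro norm_le_componentwise_cart) (simp add: round_vec_def)
  then show ?thesis by simp
qed

lemma norm_round_vec_near: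
  fixes t :: "real^'n::finite"
  shows "norm t \<le> norm (round_vec t) + CARD('n) / 2" "norm (round_vec t) \<le> norm t + CARD('n) / 2"
  using norm_diff_round_vec_le[of t] norm_triangle_sub[of t "round_vec t"] norm_triangle_sub[of "round_vec t" t]
  by (auto simp: norm_minus_commute)

lemma one_le_norm_integer_vec:
  fixes z :: "real^'n::finite"
  assumes "\<And>i. z $ i \<in> \<int>" "z \<noteq> 0"
  shows "1 \<le> norm z"
proof -
  obtain i where "z $ i \<noteq> 0" using assms(2) by (metis vec_eq_iff zero_index)
  moreover obtain m where "z $ i = of_int m" using assms(1)[of i] by (auto elim: Ints_cases)
  ultimately have "1 \<le> \<bar>z $ i\<bar>" by auto
  also have "\<dots> \<le> norm z" by (rule component_le_norm_cart)
  finally show ?thesis .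
qed

lemma round_vec_eq_iff:
  fixes z :: "real^'n::finite"
  assumes "\<And>i. z $ i \<in> \<int>"
  shows "round_vec t = z \<longleftrightarrow> (\<forall>i. z $ i - 1/2 \<le> t $ i \<and> t $ i < z $ i + 1/2)"
proof -
  have "round (t $ i) = \<lfloor>z $ i\<rfloor> \<longleftrightarrow> z $ i - 1/2 \<le> t $ i \<and> t $ i < z $ i + 1/2" for i
    using assms[of i] by (auto simp: round_def floor_eq_iff elim!: Ints_cases)
  moreover have "round_vec t $ i = z $ i \<longleftrightarrow> round (t $ i) = \<lfloor>z $ i\<rfloor>" for i
    using assms[of i] by (auto simp: round_vec_def elim!: Ints_cases)
  ultimately show ?thesis by (simp add: vec_eq_iff)
qed

lemma has_integral_round_vec_eq:
  fixes z :: "real^'n::finite" and c :: real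
  assumes "\<And>i. z $ i \<in> \<int>"
  shows "((\<lambda>t. if round_vec t = z then c else 0) has_integral c) UNIV"
proof -
  let ?a = "(\<chi> i. z $ i - 1/2) :: real^'n" and ?b = "(\<chi> i. z $ i + 1/2) :: real^'n"
  have "z \<in> cbox ?a ?b" by (simp add: mem_box_cart)
  then have "cbox ?a ?b \<noteq> {}" by auto
  then have "((\<lambda>t. c) has_integral c) (cbox ?a ?b)"
    using has_integral_const[of c ?a ?b] by (simp add: content_cbox_cart)
  then have cube: "((\<lambda>t. if t \<in> cbox ?a ?b then c else 0) has_integral c) UNIV"
    by (rule has_integral_restrict_UNIV[THEN iffD2])
  show ?thesis
  proof (rule has_integral_spike[OF negligible_frontier_interval _ cube])
    fix t assume "t \<in> UNIV - (cbox ?a ?b - box ?a ?b)"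
    then have "round_vec t = z \<longleftrightarrow> t \<in> cbox ?a ?b"
      unfolding round_vec_eq_iff[OF assms] by (auto simp: mem_box_cart less_imp_le)
    then show "(if round_vec t = z then c else 0) = (if t \<in> cbox ?a ?b then c else 0)" by simp
  qed
qed

lemma has_integral_lattice_sum:
  fixes S :: "(real^'n::finite) set" and g :: "real^'n \<Rightarrow> real"
  assumes "finite S" "\<And>z i. z \<in> S \<Longrightarrow> z $ i \<in> \<int>"
  shows "((\<lambda>t. if round_vec t \<in> S then g (round_vec t) else 0) has_integral (\<Sum>z\<in>S. g z)) UNIV"
proof -
  have "((\<lambda>t. \<Sum>z\<in>S. if round_vec t = z then g z else 0) has_integral (\<Sum>z\<in>S. g z)) UNIV"
    by (intro has_integral_sum assms(1) has_integral_round_vec_eq assms(2))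
  moreover have "(\<lambda>t. \<Sum>z\<in>S. if round_vec t = z then g z else 0)
      = (\<lambda>t. if round_vec t \<in> S then g (round_vec t) else 0)"
    using assms(1) by auto
  ultimately show ?thesis by simp
qed

lemma norm_le_round_vec:
  fixes t :: "real^'n::finite"
  assumes "round_vec t \<noteq> 0"
  shows "norm t \<le> (1 + real CARD('n)) * norm (round_vec t)"
proof -
  have r: "1 \<le> norm (round_vec t)" by (rule one_le_norm_integer_vec[OF round_vec_integer assms])
  have "norm t \<le> norm (round_vec t) + norm (t - round_vec t)" by (rule norm_triangle_sub)
  also have "\<dots> \<le> norm (round_vec t) + CARD('n) * 1" using norm_diff_round_vec_le[of t] by simp
  also have "\<dots> \<le> norm (round_vec t) + CARD('n) * norm (round_vec t)"
    using r by (intro add_left_mono mult_left_mono) auto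
  finally show ?thesis by (simp add: algebra_simps)
qed

lemma inverse_veronese_norm_round_vec_diff_le:
  fixes t :: "real^'n::finite"
  assumes "round_vec t \<noteq> 0"
  shows "\<bar>1 / veronese_norm d t - 1 / veronese_norm d (round_vec t)\<bar>
    \<le> real (card (veronese_exps d :: ('n \<Rightarrow> nat) set)) * real d * (1 + real CARD('n)) ^ (2 * d)
        * real CARD('n) ^ Suc d / norm t ^ Suc d"
proof -
  let ?r = "round_vec t" and ?N = "real CARD('n)"
  have "1 \<le> norm ?r" by (rule one_le_norm_integer_vec[OF round_vec_integer assms])
  then have t: "1/2 \<le> norm t" using norm_round_vec_le[of t] by linarith
  have "2 * norm t \<le> (1 + ?N) * norm t" by (intro mult_right_mono) auto
  then have "norm ?r \<le> (1 + ?N) * norm t" using norm_round_vec_le[of t] by linarith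
  then have "\<bar>1 / veronese_norm d t - 1 / veronese_norm d ?r\<bar>
      \<le> real (card (veronese_exps d :: ('n \<Rightarrow> nat) set)) * d * (1 + ?N) ^ (2 * d) * ?N ^ d
         * norm (t - ?r) / norm t ^ (d + 1)"
    using t norm_le_round_vec[OF assms] by (intro inverse_veronese_norm_diff_le) auto
  also have "\<dots> \<le> real (card (veronese_exps d :: ('n \<Rightarrow> nat) set)) * d * (1 + ?N) ^ (2 * d) * ?N ^ d
         * ?N / norm t ^ (d + 1)"
    using norm_diff_round_vec_le[of t] t by (intro divide_right_mono mult_left_mono) auto
  finally show ?thesis by (simp add: algebra_simps)
qed

section \<open>A pointwise majorant for the error\<close>

text \<open>The three terms bound the error on the bulk of the ball (rounding error of \<open>f\<close>),
  on the shell \<open>Z - N < |t| \<le> Z + N\<close> where lattice sum and integral have different supports,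
  and on a ball around the origin; \<open>N\<close> is the dimension.\<close>

definition lattice_error_majorant :: "nat \<Rightarrow> real \<Rightarrow> nat \<Rightarrow> real^'n::finite \<Rightarrow> real" where
  "lattice_error_majorant d Z J t =
      real (card (veronese_exps d :: ('n \<Rightarrow> nat) set)) * real d * (1 + real CARD('n)) ^ (2 * d)
        * real CARD('n) ^ Suc d * dyadic_step (2 ^ J) (Suc J) (Suc d) t
    + sqrt (real CARD('n)) ^ d * (1 + real CARD('n)) ^ d / Z ^ d
        * (if max (Z - real CARD('n)) 0 < norm t \<and> norm t \<le> Z + real CARD('n) then 1 else 0)
    + (if norm t \<le> real CARD('n) then 1 / veronese_norm d t else 0)"

context
  fixes d J :: nat and Z :: real and t :: "real^'n::finite"
  assumes Z: "0 < Z"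
begin

lemma lattice_error_majorant_terms_nonneg:
  "0 \<le> real (card (veronese_exps d :: ('n \<Rightarrow> nat) set)) * real d * (1 + real CARD('n)) ^ (2 * d)
        * real CARD('n) ^ Suc d * dyadic_step (2 ^ J) (Suc J) (Suc d) t"
  "0 \<le> sqrt (real CARD('n)) ^ d * (1 + real CARD('n)) ^ d / Z ^ d
        * (if max (Z - real CARD('n)) 0 < norm t \<and> norm t \<le> Z + real CARD('n) then 1 else 0)"
  "0 \<le> (if norm t \<le> real CARD('n) then 1 / veronese_norm d t else 0)"
  using Z dyadic_step_nonneg[of "2 ^ J" "Suc J" "Suc d" t] inverse_veronese_norm_nonneg by auto

lemma lattice_error_majorant_ge_step:
  "real (card (veronese_exps d :: ('n \<Rightarrow> nat) set)) * real d * (1 + real CARD('n)) ^ (2 * d)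
      * real CARD('n) ^ Suc d * dyadic_step (2 ^ J) (Suc J) (Suc d) t \<le> lattice_error_majorant d Z J t"
  using lattice_error_majorant_terms_nonneg by (simp add: lattice_error_majorant_def)

lemma lattice_error_majorant_ge_shell:
  fixes x :: "real^'n"
  assumes "max (Z - real CARD('n)) 0 < norm t" "norm t \<le> Z + real CARD('n)"
    and "Z / (1 + real CARD('n)) \<le> norm x"
  shows "1 / veronese_norm d x \<le> lattice_error_majorant d Z J t"
proof -
  have "1 / veronese_norm d x \<le> sqrt (real CARD('n)) ^ d * (1 + real CARD('n)) ^ d / Z ^ d"
    by (rule inverse_veronese_norm_le_shell[OF Z _ assms(3)]) simp
  also have "\<dots> \<le> lattice_error_majorant d Z J t"
    using lattice_error_majorant_terms_nonneg assms(1,2) by (simp add: lattice_error_majorant_def)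
  finally show ?thesis .
qed

lemma lattice_error_majorant_ge_core:
  "norm t \<le> real CARD('n) \<Longrightarrow> 1 / veronese_norm d t \<le> lattice_error_majorant d Z J t"
  using lattice_error_majorant_terms_nonneg by (simp add: lattice_error_majorant_def)

lemma lattice_error_majorant_nonneg: "0 \<le> lattice_error_majorant d Z J t"
  using lattice_error_majorant_terms_nonneg by (simp add: lattice_error_majorant_def)

end

lemma lattice_error_le_majorant_at_lattice_point:
  fixes t :: "real^'n::finite"
  assumes Z: "1 \<le> Z" "Z \<le> 2 ^ J" and r: "round_vec t \<in> int_points Z"
  shows "\<bar>1 / veronese_norm d (round_vec t) - (if t \<in> cball 0 Z then 1 / veronese_norm d t else 0)\<bar>
         \<le> lattice_error_majorant d Z J t"
proof -
  let ?r = "round_vec t" and ?N = "real CARD('n)"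
  have Z0: "0 < Z" using Z by simp
  have r0: "?r \<noteq> 0" and rZ: "norm ?r \<le> Z" using r by (auto simp: int_points_def)
  show ?thesis
  proof (cases "t \<in> cball 0 Z")
    case True
    have "1 \<le> norm ?r" by (rule one_le_norm_integer_vec[OF round_vec_integer r0])
    then have t: "2 ^ J / 2 ^ Suc (Suc J) < norm t" "norm t \<le> 2 ^ J"
      using norm_round_vec_le[of t] True Z by (auto simp: field_simps)
    have "\<bar>1 / veronese_norm d t - 1 / veronese_norm d ?r\<bar>
        \<le> real (card (veronese_exps d :: ('n \<Rightarrow> nat) set)) * real d * (1 + ?N) ^ (2 * d)
            * ?N ^ Suc d * (1 / norm t ^ Suc d)"
      using inverse_veronese_norm_round_vec_diff_le[OF r0, of d] by simp
    also have "\<dots> \<le> lattice_error_majorant d Z J t"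
      using inverse_power_le_dyadic_step[OF _ t, of "Suc d"]
      by (intro order_trans[OF _ lattice_error_majorant_ge_step[OF Z0]] mult_left_mono) auto
    finally show ?thesis using True by (simp add: abs_minus_commute)
  next
    case False
    then have "max (Z - ?N) 0 < norm t" "norm t \<le> Z + ?N"
      using norm_round_vec_near[of t] rZ Z0 by auto
    moreover have "Z / (1 + ?N) \<le> norm ?r"
      using norm_le_round_vec[OF r0] False by (simp add: field_simps)
    ultimately show ?thesis
      using lattice_error_majorant_ge_shell[OF Z0, where t=t] False by (simp add: veronese_norm_nonneg)
  qed
qed

lemma lattice_error_le_majorant_off_lattice_point:
  fixes t :: "real^'n::finite"
  assumes Z: "0 < Z" and r: "round_vec t \<notin> int_points Z" and t: "t \<in> cball 0 Z"
  shows "1 / veronese_norm d t \<le> lattice_error_majorant d Z J t"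
proof (cases "round_vec t = 0")
  case True
  then show ?thesis
    using norm_round_vec_near(1)[of t] lattice_error_majorant_ge_core[OF Z, where t=t] by simp
next
  case False
  let ?N = "real CARD('n)"
  have "Z < norm (round_vec t)"
    using False r round_vec_integer by (auto simp: int_points_def)
  then have "Z / 2 < norm t" using norm_round_vec_le[of t] by linarith
  moreover have "Z / (1 + ?N) \<le> Z / 2" using Z by (intro divide_left_mono) auto
  ultimately have "Z / (1 + ?N) \<le> norm t" by linarith
  moreover have "max (Z - ?N) 0 < norm t" "norm t \<le> Z + ?N"
    using norm_round_vec_near(2)[of t] \<open>Z < norm (round_vec t)\<close> \<open>Z / 2 < norm t\<close> t Z by auto
  ultimately show ?thesis by (meson lattice_error_majorant_ge_shell[OF Z, where t=t])
qed

lemma lattice_error_le_majorant: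
  fixes t :: "real^'n::finite"
  assumes "1 \<le> Z" "Z \<le> 2 ^ J"
  shows "\<bar>(if round_vec t \<in> int_points Z then 1 / veronese_norm d (round_vec t) else 0)
          - (if t \<in> cball 0 Z then 1 / veronese_norm d t else 0)\<bar>
         \<le> lattice_error_majorant d Z J t"
proof (cases "round_vec t \<in> int_points Z")
  case True
  then show ?thesis using lattice_error_le_majorant_at_lattice_point[OF assms True] by simp
next
  case False
  have "0 < Z" using assms by simp
  then show ?thesis
    using lattice_error_le_majorant_off_lattice_point[OF _ False]
      lattice_error_majorant_nonneg[where t=t] False
    by (simp add: veronese_norm_nonneg)
qed

lemma has_integral_lattice_error_majorant:
  assumes "d < CARD('n::finite)" "0 < Z"
  shows "((lattice_error_majorant d Z J :: real^'n \<Rightarrow> real) has_integral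
      real (card (veronese_exps d :: ('n \<Rightarrow> nat) set)) * real d * (1 + real CARD('n)) ^ (2 * d)
        * real CARD('n) ^ Suc d * (unit_ball_vol CARD('n) * 2 ^ Suc d * (2 ^ J) ^ (CARD('n) - Suc d)
        * (\<Sum>i\<le>Suc J. ((1/2) ^ (CARD('n) - Suc d)) ^ i))
    + sqrt (real CARD('n)) ^ d * (1 + real CARD('n)) ^ d / Z ^ d
        * (1 * unit_ball_vol CARD('n) * (Z + CARD('n)) ^ CARD('n)
           - 1 * unit_ball_vol CARD('n) * (max (Z - CARD('n)) 0) ^ CARD('n))
    + real CARD('n) ^ (CARD('n) - d) * integral (cball (0::real^'n) 1) (\<lambda>t. 1 / veronese_norm d t)) UNIV"
proof -
  let ?N = "real CARD('n)"
  have shell: "(if max (Z - ?N) 0 < norm t \<and> norm t \<le> Z + ?N then 1 else 0)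
      = (if norm t \<le> Z + ?N then 1 else 0) - (if norm t \<le> max (Z - ?N) 0 then 1 else (0::real))"
    for t :: "real^'n"
    using assms(2) by (auto simp: max_def)
  have core: "((\<lambda>t::real^'n. if norm t \<le> ?N then 1 / veronese_norm d t else 0) has_integral
      ?N ^ (CARD('n) - d) * integral (cball (0::real^'n) 1) (\<lambda>t. 1 / veronese_norm d t)) UNIV"
    using has_integral_inverse_veronese_norm_cball[OF assms(1), of ?N]
    by (simp flip: has_integral_restrict_UNIV[of "cball 0 ?N"])
  show ?thesis
    unfolding lattice_error_majorant_def shell
    using assms
    by (intro has_integral_add has_integral_mult_right has_integral_dyadic_step has_integral_diff
        has_integral_const_cball core) auto
qed

lemma lattice_sum_error_le_integral:
  assumes "d < CARD('n::finite)" "1 \<le> Z" "Z \<le> 2 ^ J"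
  shows "\<bar>(\<Sum>z\<in>(int_points Z :: (real^'n) set). 1 / veronese_norm d z)
          - Z ^ (CARD('n) - d) * integral (cball (0::real^'n) 1) (\<lambda>t. 1 / veronese_norm d t)\<bar>
     \<le> integral UNIV (lattice_error_majorant d Z J :: real^'n \<Rightarrow> real)"
proof -
  let ?F = "\<lambda>t::real^'n. if round_vec t \<in> int_points Z then 1 / veronese_norm d (round_vec t) else 0"
  let ?g = "\<lambda>t::real^'n. if t \<in> cball 0 Z then 1 / veronese_norm d t else 0"
  have "(?F has_integral (\<Sum>z\<in>(int_points Z :: (real^'n) set). 1 / veronese_norm d z)) UNIV"
    by (rule has_integral_lattice_sum[OF finite_int_points]) (auto simp: int_points_def)
  moreover have "(?g has_integral Z ^ (CARD('n) - d) * integral (cball (0::real^'n) 1) (\<lambda>t. 1 / veronese_norm d t)) UNIV"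
    using has_integral_inverse_veronese_norm_cball[OF assms(1), of Z] assms(2)
    by (simp only: has_integral_restrict_UNIV)
  ultimately have diff: "((\<lambda>t. ?F t - ?g t) has_integral
      (\<Sum>z\<in>(int_points Z :: (real^'n) set). 1 / veronese_norm d z)
        - Z ^ (CARD('n) - d) * integral (cball (0::real^'n) 1) (\<lambda>t. 1 / veronese_norm d t)) UNIV"
    by (rule has_integral_diff)
  have "(lattice_error_majorant d Z J :: real^'n \<Rightarrow> real) integrable_on UNIV"
    using has_integral_lattice_error_majorant[OF assms(1), of Z J] assms(2) by auto
  then show ?thesis
    using integral_norm_bound_integral[OF has_integral_integrable[OF diff]]
      lattice_error_le_majorant[OF assms(2,3)] integral_unique[OF diff]
    by auto
qed

section \<open>Asymptotics\<close>

lemma power_diff_le_mean_value: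
  fixes x y :: real
  assumes "0 \<le> y" "y \<le> x"
  shows "x ^ n - y ^ n \<le> n * x ^ (n - 1) * (x - y)"
proof (cases "x = 0 \<or> n = 0")
  case False
  then have x: "0 < x" and n: "x ^ n = x ^ (n - 1) * x" using assms
    by (auto simp flip: power_Suc2)
  have "\<bar>x ^ n - y ^ n\<bar> * x \<le> n * x ^ n * \<bar>x - y\<bar>" by (rule abs_power_diff_le) (use assms in auto)
  moreover have "y ^ n \<le> x ^ n" by (rule power_mono) (use assms in auto)
  ultimately have "(x ^ n - y ^ n) * x \<le> n * x ^ n * (x - y)" using assms by simp
  also have "\<dots> = (n * x ^ (n - 1) * (x - y)) * x" unfolding n by (simp add: ac_simps)
  finally show ?thesis using x by simp
qed (use assms in auto)

lemma shell_power_diff_le: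
  fixes Z c :: real
  assumes "1 \<le> Z" "0 \<le> c" "d < n"
  shows "((Z + c) ^ n - (max (Z - c) 0) ^ n) / Z ^ d \<le> 2 * c * n * (1 + c) ^ (n - 1) * Z ^ (n - Suc d)"
proof -
  have "(Z + c) ^ n - (max (Z - c) 0) ^ n \<le> n * (Z + c) ^ (n - 1) * ((Z + c) - max (Z - c) 0)"
    using assms by (intro power_diff_le_mean_value) auto
  also have "\<dots> \<le> n * ((1 + c) ^ (n - 1) * Z ^ (n - 1)) * (2 * c)"
  proof (intro mult_mono)
    have "Z + c \<le> (1 + c) * Z"
      using mult_right_mono[OF assms(1,2)] by (simp add: algebra_simps)
    then show "(Z + c) ^ (n - 1) \<le> (1 + c) ^ (n - 1) * Z ^ (n - 1)"
      using assms by (simp flip: power_mult_distrib add: power_mono)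
  qed (use assms in auto)
  also have "\<dots> = 2 * c * n * (1 + c) ^ (n - 1) * Z ^ (n - Suc d) * Z ^ d"
    using assms(3) by (simp flip: power_add add: algebra_simps)
  finally show ?thesis using assms(1) by (simp add: divide_le_eq)
qed

lemma ceiling_log2_bounds:
  fixes Z :: real
  assumes "1 \<le> Z"
  shows "Z \<le> 2 ^ nat \<lceil>log 2 Z\<rceil>" "2 ^ nat \<lceil>log 2 Z\<rceil> \<le> 2 * Z"
    and "nat \<lceil>log 2 Z\<rceil> \<le> log 2 Z + 1"
proof -
  have J: "real (nat \<lceil>log 2 Z\<rceil>) = \<lceil>log 2 Z\<rceil>" using assms by simp
  then have pow: "(2::real) ^ nat \<lceil>log 2 Z\<rceil> = 2 powr \<lceil>log 2 Z\<rceil>" by (metis powr_realpow zero_less_numeral)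
  have "Z = 2 powr log 2 Z" using assms by simp
  also have "\<dots> \<le> 2 powr \<lceil>log 2 Z\<rceil>" by (intro powr_mono) auto
  finally show "Z \<le> 2 ^ nat \<lceil>log 2 Z\<rceil>" unfolding pow .
  have "2 powr \<lceil>log 2 Z\<rceil> \<le> 2 powr (log 2 Z + 1)" by (intro powr_mono) linarith+
  also have "\<dots> = 2 * Z" using assms by (simp add: powr_add)
  finally show "2 ^ nat \<lceil>log 2 Z\<rceil> \<le> 2 * Z" unfolding pow .
  show "nat \<lceil>log 2 Z\<rceil> \<le> log 2 Z + 1" unfolding J by linarith
qed

lemma dyadic_sum_le:
  fixes Z :: real
  assumes "2 \<le> Z"
  defines "J \<equiv> nat \<lceil>log 2 Z\<rceil>"
  shows "(2 ^ J) ^ k * (\<Sum>i\<le>Suc J. ((1/2) ^ k) ^ i) \<le> 2 ^ (k + 2) / ln 2 * Z ^ k * (if k = 0 then ln Z else 1)"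
proof -
  have Z1: "1 \<le> Z" using assms by simp
  show ?thesis
  proof (cases "k = 0")
  case True
  have "real (Suc (Suc J)) \<le> log 2 Z + 3"
    using ceiling_log2_bounds(3)[OF Z1] unfolding J_def by simp
  also have "\<dots> \<le> 4 * log 2 Z" using assms by simp
  finally show ?thesis using True by (simp add: log_def)
next
  case False
  have "(1/2::real) ^ k \<le> 1/2" using power_decreasing[of 1 k "1/2::real"] False by auto
  then have "(\<Sum>i\<le>Suc J. ((1/2::real) ^ k) ^ i) \<le> 2" by (intro sum_power_le_two) auto
  moreover have "((2::real) ^ J) ^ k \<le> (2 * Z) ^ k"
    using ceiling_log2_bounds(2)[OF Z1] unfolding J_def by (intro power_mono) auto
  ultimately have "(2 ^ J) ^ k * (\<Sum>i\<le>Suc J. ((1/2) ^ k) ^ i) \<le> (2 * Z) ^ k * 2"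
    using assms by (intro mult_mono sum_nonneg) auto
  also have "\<dots> \<le> 2 ^ (k + 2) / ln 2 * Z ^ k"
    using assms ln_2_less_1 by (simp add: field_simps)
  finally show ?thesis using False by simp
  qed
qed

lemma integral_lattice_error_majorant_le:
  assumes "d < CARD('n::finite)"
  obtains K where "0 \<le> K" and "\<And>Z. 2 \<le> Z \<Longrightarrow>
    integral UNIV (lattice_error_majorant d Z (nat \<lceil>log 2 Z\<rceil>) :: real^'n \<Rightarrow> real)
      \<le> K * Z ^ (CARD('n) - Suc d) * (if CARD('n) = Suc d then ln Z else 1)"
proof -
  let ?N = "real CARD('n)" and ?k = "CARD('n) - Suc d"
  let ?L = "\<lambda>Z::real. if CARD('n) = Suc d then ln Z else 1"
  define A where "A = real (card (veronese_exps d :: ('n \<Rightarrow> nat) set)) * real d * (1 + ?N) ^ (2 * d)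
    * ?N ^ Suc d * unit_ball_vol CARD('n) * 2 ^ Suc d"
  define B where "B = sqrt ?N ^ d * (1 + ?N) ^ d * unit_ball_vol CARD('n)
    * (2 * ?N * CARD('n) * (1 + ?N) ^ (CARD('n) - 1))"
  define T where "T = ?N ^ (CARD('n) - d) * integral (cball (0::real^'n) 1) (\<lambda>t. 1 / veronese_norm d t)"
  have A: "0 \<le> A" and B: "0 \<le> B" and T: "0 \<le> T"
    using integral_inverse_veronese_norm_pos[OF assms] by (auto simp: A_def B_def T_def)
  have "integral UNIV (lattice_error_majorant d Z (nat \<lceil>log 2 Z\<rceil>) :: real^'n \<Rightarrow> real)
     \<le> (A * 2 ^ (?k + 2) + B + T) / ln 2 * Z ^ ?k * ?L Z" if Z: "2 \<le> Z" for Z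
  proof -
    let ?J = "nat \<lceil>log 2 Z\<rceil>"
    have Z0: "0 < Z" and L: "1 \<le> ?L Z / ln 2" and Zk: "1 \<le> Z ^ ?k" using Z ln_2_less_1 by auto
    have "integral UNIV (lattice_error_majorant d Z ?J :: real^'n \<Rightarrow> real)
      = A * ((2 ^ ?J) ^ ?k * (\<Sum>i\<le>Suc ?J. ((1/2) ^ ?k) ^ i))
        + sqrt ?N ^ d * (1 + ?N) ^ d * unit_ball_vol CARD('n)
          * (((Z + ?N) ^ CARD('n) - (max (Z - ?N) 0) ^ CARD('n)) / Z ^ d)
        + T"
      unfolding integral_unique[OF has_integral_lattice_error_majorant[OF assms Z0]]
      by (simp add: A_def T_def right_diff_distrib diff_divide_distrib mult_ac)
    also have "\<dots> \<le> A * (2 ^ (?k + 2) / ln 2 * Z ^ ?k * ?L Z) + B * (Z ^ ?k * (?L Z / ln 2))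
        + T * (Z ^ ?k * (?L Z / ln 2))"
    proof (intro add_mono mult_left_mono A)
      have "(?k = 0) = (CARD('n) = Suc d)" using assms by auto
      then show "(2 ^ ?J) ^ ?k * (\<Sum>i\<le>Suc ?J. ((1/2) ^ ?k) ^ i) \<le> 2 ^ (?k + 2) / ln 2 * Z ^ ?k * ?L Z"
        using dyadic_sum_le[OF Z, of ?k] by simp
      have "((Z + ?N) ^ CARD('n) - (max (Z - ?N) 0) ^ CARD('n)) / Z ^ d
          \<le> 2 * ?N * CARD('n) * (1 + ?N) ^ (CARD('n) - 1) * Z ^ ?k"
        using Z assms by (intro shell_power_diff_le) auto
      from mult_left_mono[OF this, of "sqrt ?N ^ d * (1 + ?N) ^ d * unit_ball_vol CARD('n)"]
      have "sqrt ?N ^ d * (1 + ?N) ^ d * unit_ball_vol CARD('n)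
          * (((Z + ?N) ^ CARD('n) - (max (Z - ?N) 0) ^ CARD('n)) / Z ^ d) \<le> B * Z ^ ?k"
        by (simp add: B_def mult.assoc)
      also have "\<dots> \<le> B * (Z ^ ?k * (?L Z / ln 2))"
        using mult_left_mono[OF mult_mono[OF order.refl L] B] Z0 by simp
      finally show "sqrt ?N ^ d * (1 + ?N) ^ d * unit_ball_vol CARD('n)
          * (((Z + ?N) ^ CARD('n) - (max (Z - ?N) 0) ^ CARD('n)) / Z ^ d) \<le> B * (Z ^ ?k * (?L Z / ln 2))" .
      show "T \<le> T * (Z ^ ?k * (?L Z / ln 2))"
        using mult_left_mono[OF mult_mono[OF Zk L] T] Z0 by simp
    qed
    also have "\<dots> = (A * 2 ^ (?k + 2) + B + T) / ln 2 * Z ^ ?k * ?L Z"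
      by (simp add: field_simps)
    finally show ?thesis .
  qed
  moreover have "0 \<le> (A * 2 ^ (?k + 2) + B + T) / ln 2" using A B T by simp
  ultimately show ?thesis using that by blast
qed

lemma lattice_sum_error_bound:
  assumes "d < CARD('n::finite)"
  defines "I \<equiv> integral (cball (0::real^'n) 1) (\<lambda>t. 1 / veronese_norm d t)"
  obtains C where "0 \<le> C" and "\<And>Z. 2 \<le> Z \<Longrightarrow>
    \<bar>(\<Sum>z\<in>(int_points Z :: (real^'n) set). 1 / veronese_norm d z) - I * Z ^ (CARD('n) - d)\<bar>
     \<le> C * Z ^ (CARD('n) - d) * ((if CARD('n) = Suc d then ln Z else 1) / Z)"
proof -
  obtain K where K: "0 \<le> K" "\<And>Z. 2 \<le> Z \<Longrightarrow>
    integral UNIV (lattice_error_majorant d Z (nat \<lceil>log 2 Z\<rceil>) :: real^'n \<Rightarrow> real)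
      \<le> K * Z ^ (CARD('n) - Suc d) * (if CARD('n) = Suc d then ln Z else 1)"
    using integral_lattice_error_majorant_le[OF assms(1)] by blast
  have "\<bar>(\<Sum>z\<in>(int_points Z :: (real^'n) set). 1 / veronese_norm d z) - I * Z ^ (CARD('n) - d)\<bar>
     \<le> K * Z ^ (CARD('n) - d) * ((if CARD('n) = Suc d then ln Z else 1) / Z)" if Z: "2 \<le> Z" for Z
  proof -
    have "Z ^ (CARD('n) - d) = Z * Z ^ (CARD('n) - Suc d)"
      using assms(1) by (metis Suc_diff_Suc power_Suc)
    moreover have "\<bar>(\<Sum>z\<in>(int_points Z :: (real^'n) set). 1 / veronese_norm d z) - I * Z ^ (CARD('n) - d)\<bar>
        \<le> integral UNIV (lattice_error_majorant d Z (nat \<lceil>log 2 Z\<rceil>) :: real^'n \<Rightarrow> real)"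
      using lattice_sum_error_le_integral[OF assms(1), of Z] ceiling_log2_bounds(1)[of Z] Z
      unfolding I_def by (simp add: mult.commute)
    ultimately show ?thesis using K(2)[OF Z] Z by (simp add: field_simps)
  qed
  then show ?thesis using that K(1) by blast
qed

theorem mainTheorem11:
  fixes d :: nat
  assumes "d \<ge> 2" and "CARD('n::finite) \<ge> d + 1"
  defines "I \<equiv> integral (cball (0::real^'n) 1) (\<lambda>t. 1 / veronese_norm d t)"
  shows "(\<exists>C. \<forall>Z::real. Z \<ge> 2 \<longrightarrow>
            \<bar>(\<Sum>z\<in>(int_points Z :: (real^'n) set). 1 / veronese_norm d z) - I * Z ^ (CARD('n) - d)\<bar>
              \<le> C * I * Z ^ (CARD('n) - d) * (ln Z / Z))
       \<and> (CARD('n) > d + 1 \<longrightarrow>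
          (\<exists>C. \<forall>Z::real. Z \<ge> 2 \<longrightarrow>
            \<bar>(\<Sum>z\<in>(int_points Z :: (real^'n) set). 1 / veronese_norm d z) - I * Z ^ (CARD('n) - d)\<bar>
              \<le> C * I * Z ^ (CARD('n) - d) * (1 / Z)))"
proof -
  let ?err = "\<lambda>Z. \<bar>(\<Sum>z\<in>(int_points Z :: (real^'n) set). 1 / veronese_norm d z) - I * Z ^ (CARD('n) - d)\<bar>"
  have d: "d < CARD('n)" using assms by simp
    \<comment> \<open>this is all that is used of the hypotheses: the argument works for every degree\<close>
  obtain C where C: "0 \<le> C" "\<And>Z. 2 \<le> Z \<Longrightarrow>
      ?err Z \<le> C * Z ^ (CARD('n) - d) * ((if CARD('n) = Suc d then ln Z else 1) / Z)"
    using lattice_sum_error_bound[OF d] unfolding I_def by blast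
  have I: "0 < I" unfolding I_def by (rule integral_inverse_veronese_norm_pos[OF d])
  have "?err Z \<le> C / (I * ln 2) * I * Z ^ (CARD('n) - d) * (ln Z / Z)" if Z: "2 \<le> Z" for Z
  proof -
    have "(if CARD('n) = Suc d then ln Z else 1) \<le> ln Z / ln 2"
      using Z ln_2_less_1 ln_le_cancel_iff[of 2 Z] by (auto simp: field_simps)
    then have "C * Z ^ (CARD('n) - d) * ((if CARD('n) = Suc d then ln Z else 1) / Z)
        \<le> C * Z ^ (CARD('n) - d) * (ln Z / ln 2 / Z)"
      using C(1) Z by (intro mult_left_mono divide_right_mono) auto
    then show ?thesis using C(2)[OF Z] I by (simp add: field_simps)
  qed
  moreover have "?err Z \<le> C / I * I * Z ^ (CARD('n) - d) * (1 / Z)" if "CARD('n) > d + 1" "2 \<le> Z" for Z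
    using C(2)[OF that(2)] that I by simp
  ultimately show ?thesis by blast
qed

end
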